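(* If $\Phi\in\mathcal F\otimes_{\mathbb C}\mathbb C(t_1,t_2)$ (depending on $q$) is a solution of $q\frac{d}{dq}\Phi=\mathsf M_D\Phi$, then $\Theta\Phi_z$ is a solution of $zq\frac{d}{dq}\Phi=\mathsf M_D\Phi$, where $\Phi_z=\Phi(t_1/z,t_2/z,q)$ and $\Theta|\mu\rangle=z^{\ell(\mu)}|\mu\rangle$.
   Context: $\mathcal F$ is the Fock space generated by commuting creation operators $\alpha_{-k}$ ($k>0$) on a vacuum $v_\emptyset$, with annihilators $\alpha_k$, $\alpha_kv_\emptyset=0$, $[\alpha_k,\alpha_l]=k\delta_{k+l,0}$, and basis $|\mu\rangle=\frac1{\mathfrak z(\mu)}\prod_i\alpha_{-\mu_i}v_\emptyset$ indexed by partitions, $\ell(\mu)$ the length. With $|\cdot|=\sum_{k>0}\alpha_{-k}\alpha_k$, $$\mathsf M_D=\mathsf M_D(q;t_1,t_2)=(t_1+t_2)\sum_{k>0}\frac k2\frac{(-q)^k+1}{(-q)^k-1}\alpha_{-k}\alpha_k-\frac{t_1+t_2}{2}\frac{(-q)+1}{(-q)-1}|\cdot|+\frac12\sum_{k,l>0}\big[t_1t_2\alpha_{k+l}\alpha_{-k}\alpha_{-l}-\alpha_{-k-l}\alpha_k\alpha_l\big].$$ *)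

theory Defs
  imports "HOL-Analysis.Analysis" "HOL-Library.Multiset"
begin

text \<open>Bosonic Fock space realised as the polynomial ring in p_1, p_2, ...:
  alpha_{-k} = multiplication by p_k, alpha_k = k d/dp_k, vacuum = 1.
  A partition mu is a multiset of positive naturals; a vector is given by its
  coefficient function w.r.t. the monomials p_mu = prod_i p_{mu_i}
  (so |mu> = p_mu / z(mu)).  Since all operators involved preserve the grading
  |mu|, we allow arbitrary coefficient functions (graded completion).\<close>

type_synonym fock = "nat multiset \<Rightarrow> complex"

definition acre :: "nat \<Rightarrow> fock \<Rightarrow> fock" where
  "acre k f = (\<lambda>\<mu>. if k \<in># \<mu> then f (\<mu> - {#k#}) else 0)"

definition aann :: "nat \<Rightarrow> fock \<Rightarrow> fock" where
  "aann k f = (\<lambda>\<mu>. of_nat k * of_nat (count \<mu> k + 1) * f (\<mu> + {#k#}))"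

definition energy :: "fock \<Rightarrow> fock" where
  "energy f = (\<lambda>\<mu>. \<Sum>\<^sub>\<infinity>k\<in>{k. k > 0}. acre k (aann k f) \<mu>)"

definition MD :: "complex \<Rightarrow> complex \<Rightarrow> complex \<Rightarrow> fock \<Rightarrow> fock" where
  "MD q t1 t2 f = (\<lambda>\<mu>.
      (t1 + t2) * (\<Sum>\<^sub>\<infinity>k\<in>{k. k > 0}.
          of_nat k / 2 * (((-q)^k + 1) / ((-q)^k - 1)) * acre k (aann k f) \<mu>)
    - (t1 + t2) / 2 * (((-q) + 1) / ((-q) - 1)) * energy f \<mu>
    + 1/2 * (\<Sum>\<^sub>\<infinity>(k,l)\<in>{(k,l). k > 0 \<and> l > 0}.
          t1 * t2 * aann (k + l) (acre k (acre l f)) \<mu>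
          - acre (k + l) (aann k (aann l f)) \<mu>))"

definition Theta :: "complex \<Rightarrow> fock \<Rightarrow> fock" where
  "Theta z f = (\<lambda>\<mu>. z ^ size \<mu> * f \<mu>)"

definition solves :: "complex \<Rightarrow> complex \<Rightarrow> complex \<Rightarrow> complex set \<Rightarrow> (complex \<Rightarrow> fock) \<Rightarrow> bool" where
  "solves c t1 t2 S \<Psi> \<longleftrightarrow> (\<forall>q\<in>S. \<forall>\<mu>. \<exists>d.
      ((\<lambda>w. \<Psi> w \<mu>) has_field_derivative d) (at q) \<and> c * q * d = MD q t1 t2 (\<Psi> q) \<mu>)"

end

theory Submission
  imports Defs
begin

text \<open>Rescaling (t1, t2) to (t1/z, t2/z) and conjugating by Theta only rescales each term
  of M_D by a power of z: the diagonal terms preserve the length of a partition and are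
  linear in t1 + t2, the joining term alpha_{-k-l} alpha_k alpha_l lowers the length by one,
  and the splitting term t1 t2 alpha_{k+l} alpha_{-k} alpha_{-l} raises it by one and is
  quadratic in t.  Altogether M_D(q; t1, t2) Theta = z Theta M_D(q; t1/z, t2/z), and since
  Theta does not depend on q it commutes with q d/dq.\<close>

lemma acre_aann_Theta:
  "acre k (aann k (Theta z f)) \<mu> = z ^ size \<mu> * acre k (aann k f) \<mu>"
proof (cases "k \<in># \<mu>")
  case True
  then obtain \<nu> where "\<mu> = add_mset k \<nu>" by (metis multi_member_split)
  then show ?thesis by (simp add: acre_def aann_def Theta_def)
qed (simp add: acre_def)

lemma acre_aann_aann_Theta:
  "acre (k + l) (aann k (aann l (Theta z f))) \<mu>
     = z ^ (size \<mu> + 1) * acre (k + l) (aann k (aann l f)) \<mu>"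
proof (cases "k + l \<in># \<mu>")
  case True
  then obtain \<nu> where "\<mu> = add_mset (k + l) \<nu>" by (metis multi_member_split)
  then show ?thesis by (simp add: acre_def aann_def Theta_def)
qed (simp add: acre_def)

lemma aann_acre_acre_Theta:
  "z ^ 2 * aann (k + l) (acre k (acre l (Theta z f))) \<mu>
     = z ^ (size \<mu> + 1) * aann (k + l) (acre k (acre l f)) \<mu>"
proof (cases "k \<in># \<mu> + {#k + l#} \<and> l \<in># \<mu> + {#k + l#} - {#k#}")
  case True
  then obtain \<nu> where \<nu>: "\<mu> + {#k + l#} = add_mset k \<nu>" by (metis multi_member_split)
  with True obtain \<rho> where \<rho>: "\<nu> = add_mset l \<rho>"
    by (metis multi_member_split add_mset_remove_trivial)
  have "size \<mu> + 1 = size \<rho> + 2" using arg_cong[OF \<nu>, of size] \<rho> by simp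
  then show ?thesis using \<nu> \<rho>
    by (simp add: acre_def aann_def Theta_def power_add power2_eq_square algebra_simps)
qed (auto simp: acre_def aann_def)

lemma energy_Theta: "energy (Theta z f) \<mu> = z ^ size \<mu> * energy f \<mu>"
  unfolding energy_def by (simp add: acre_aann_Theta infsum_cmult_right')

lemma MD_Theta:
  assumes "z \<noteq> 0"
  shows "MD q t1 t2 (Theta z f) \<mu> = z ^ (size \<mu> + 1) * MD q (t1 / z) (t2 / z) f \<mu>"
proof -
  let ?n = "size \<mu>"
  define c where "c k = of_nat k / 2 * (((-q) ^ k + 1) / ((-q) ^ k - 1))" for k :: nat
  have diagonal: "(\<Sum>\<^sub>\<infinity>k\<in>{k. k > 0}. c k * acre k (aann k (Theta z f)) \<mu>)
      = z ^ ?n * (\<Sum>\<^sub>\<infinity>k\<in>{k. k > 0}. c k * acre k (aann k f) \<mu>)"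
    by (subst infsum_cmult_right'[symmetric]) (simp add: acre_aann_Theta mult_ac)
  have cut_join: "(\<Sum>\<^sub>\<infinity>(k, l)\<in>{(k, l). k > 0 \<and> l > 0}.
          t1 * t2 * aann (k + l) (acre k (acre l (Theta z f))) \<mu>
          - acre (k + l) (aann k (aann l (Theta z f))) \<mu>)
      = z ^ (?n + 1) * (\<Sum>\<^sub>\<infinity>(k, l)\<in>{(k, l). k > 0 \<and> l > 0}.
          t1 / z * (t2 / z) * aann (k + l) (acre k (acre l f)) \<mu>
          - acre (k + l) (aann k (aann l f)) \<mu>)"
  proof (subst infsum_cmult_right'[symmetric], rule infsum_cong, clarify)
    fix k l :: nat
    have "t1 * t2 * aann (k + l) (acre k (acre l (Theta z f))) \<mu>
        = z ^ (?n + 1) * (t1 / z * (t2 / z) * aann (k + l) (acre k (acre l f)) \<mu>)"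
      using aann_acre_acre_Theta[of z k l f \<mu>] assms
      by (simp add: field_simps power2_eq_square)
    then show "t1 * t2 * aann (k + l) (acre k (acre l (Theta z f))) \<mu>
          - acre (k + l) (aann k (aann l (Theta z f))) \<mu>
        = z ^ (?n + 1) * (t1 / z * (t2 / z) * aann (k + l) (acre k (acre l f)) \<mu>
          - acre (k + l) (aann k (aann l f)) \<mu>)"
      by (simp add: acre_aann_aann_Theta right_diff_distrib)
  qed
  have "(t1 + t2) * (z ^ ?n * S1) - (t1 + t2) / 2 * e * (z ^ ?n * E) + 1 / 2 * (z ^ (?n + 1) * S2)
      = z ^ (?n + 1) * ((t1 / z + t2 / z) * S1 - (t1 / z + t2 / z) / 2 * e * E + 1 / 2 * S2)"
    for S1 e E S2 :: complex
    using assms by (simp add: field_simps)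
  then show ?thesis
    unfolding MD_def c_def[symmetric] diagonal cut_join energy_Theta .
qed

lemma solves_Theta:
  assumes "z \<noteq> 0" and "solves c (t1 / z) (t2 / z) S \<Psi>"
  shows "solves (c * z) t1 t2 S (\<lambda>q. Theta z (\<Psi> q))"
  unfolding solves_def
proof (intro ballI allI)
  fix q \<mu> assume "q \<in> S"
  then obtain d where d: "((\<lambda>w. \<Psi> w \<mu>) has_field_derivative d) (at q)"
    and eq: "c * q * d = MD q (t1 / z) (t2 / z) (\<Psi> q) \<mu>"
    using assms(2) unfolding solves_def by blast
  have "((\<lambda>w. Theta z (\<Psi> w) \<mu>) has_field_derivative z ^ size \<mu> * d) (at q)"
    unfolding Theta_def by (rule DERIV_cmult[OF d])
  moreover have "c * z * q * (z ^ size \<mu> * d) = MD q t1 t2 (Theta z (\<Psi> q)) \<mu>"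
    using eq by (simp add: MD_Theta[OF assms(1)] algebra_simps)
  ultimately show "\<exists>d. ((\<lambda>w. Theta z (\<Psi> w) \<mu>) has_field_derivative d) (at q)
      \<and> c * z * q * d = MD q t1 t2 (Theta z (\<Psi> q)) \<mu>"
    by blast
qed

theorem proposition1:
  fixes \<Phi> :: "complex \<Rightarrow> complex \<Rightarrow> complex \<Rightarrow> fock"
    and T :: "(complex \<times> complex) set" and S :: "complex set"
    and z t1 t2 :: complex
  assumes "z \<noteq> 0" and "open S"
    and "\<forall>(s1, s2) \<in> T. solves 1 s1 s2 S (\<Phi> s1 s2)"
    and "(t1 / z, t2 / z) \<in> T"
  shows "solves z t1 t2 S (\<lambda>q. Theta z (\<Phi> (t1 / z) (t2 / z) q))"
proof -
  have "solves 1 (t1 / z) (t2 / z) S (\<Phi> (t1 / z) (t2 / z))"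
    using assms(3,4) by blast
  from solves_Theta[OF assms(1) this] show ?thesis by simp
qed

end
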